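(* Let $\Phi$ be irreducible with highest root $\gamma$ and $\mathfrak h_\gamma=\Phi^+\setminus\{\gamma\}$. Let $v,w\in W$ with $v>w$ in Bruhat order. Then $\ell_\gamma(w)=\ell_\gamma(v)$ if and only if all of the following hold: $v$ is a cover of $w$; $N_w=N^\gamma_w$; and there exists $\beta\in N_v$ with $v^{-1}\beta=-\gamma$.
   Context: $\Phi$ is a crystallographic root system in a real Euclidean space with base $\Delta$, positive roots $\Phi^+$, $\Phi^-=-\Phi^+$, Weyl group $W$ with length $\ell$; $s_\alpha$ is the reflection through $\alpha$. $\Phi$ irreducible means it is not a disjoint union of two root systems; then there is a unique highest root $\gamma\in\Phi^+$ with $\alpha\prec\gamma$ for all $\alpha\in\Phi$, where $\alpha\prec\beta$ means $\beta-\alpha$ is a sum of positive roots. For $w\in W$, $N_w=\{\beta\in\Phi^+: w^{-1}\beta\in\Phi^-\}$, $N^\gamma_w=\{\beta\in\Phi^+: w^{-1}\beta\in-\mathfrak h_\gamma\}$, and $\ell_\gamma(w)=|N^\gamma_w|$. The Bruhat graph has vertex set $W$ and edges $u\to s_\alpha u$ for $\alpha\in\Phi^+$ with $(s_\alpha u)^{-1}\alpha\in\Phi^-$; Bruhat order $<$ is the transitive closure. $v$ is a cover of $w$ if $v=s_\alpha w$ with $w\to v$ a Bruhat graph edge and $\ell(v)=\ell(w)+1$. *)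

theory Defs
  imports "HOL-Analysis.Analysis"
begin

definition refl :: "'a::euclidean_space \<Rightarrow> 'a \<Rightarrow> 'a" where
  "refl \<alpha> x = x - (2 * (x \<bullet> \<alpha>) / (\<alpha> \<bullet> \<alpha>)) *\<^sub>R \<alpha>"

definition root_system :: "'a::euclidean_space set \<Rightarrow> bool" where
  "root_system \<Phi> \<longleftrightarrow> finite \<Phi> \<and> 0 \<notin> \<Phi> \<and> span \<Phi> = UNIV
     \<and> (\<forall>\<alpha>\<in>\<Phi>. \<forall>\<beta>\<in>\<Phi>. refl \<alpha> \<beta> \<in> \<Phi>)
     \<and> (\<forall>\<alpha>\<in>\<Phi>. \<forall>c::real. c *\<^sub>R \<alpha> \<in> \<Phi> \<longrightarrow> c = 1 \<or> c = -1)
     \<and> (\<forall>\<alpha>\<in>\<Phi>. \<forall>\<beta>\<in>\<Phi>. 2 * (\<beta> \<bullet> \<alpha>) / (\<alpha> \<bullet> \<alpha>) \<in> \<int>)"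

definition irreducible_rs :: "'a::euclidean_space set \<Rightarrow> bool" where
  "irreducible_rs \<Phi> \<longleftrightarrow> \<not> (\<exists>\<Phi>1 \<Phi>2. \<Phi>1 \<noteq> {} \<and> \<Phi>2 \<noteq> {} \<and> \<Phi>1 \<union> \<Phi>2 = \<Phi> \<and> \<Phi>1 \<inter> \<Phi>2 = {}
      \<and> (\<forall>\<alpha>\<in>\<Phi>1. \<forall>\<beta>\<in>\<Phi>2. \<alpha> \<bullet> \<beta> = 0))"

definition is_base :: "'a::euclidean_space set \<Rightarrow> 'a set \<Rightarrow> bool" where
  "is_base \<Phi> \<Delta> \<longleftrightarrow> \<Delta> \<subseteq> \<Phi> \<and> independent \<Delta> \<and>
     (\<forall>\<beta>\<in>\<Phi>. \<exists>c. (\<forall>\<delta>\<in>\<Delta>. c \<delta> \<in> \<int>) \<and> \<beta> = (\<Sum>\<delta>\<in>\<Delta>. c \<delta> *\<^sub>R \<delta>) \<and>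
        ((\<forall>\<delta>\<in>\<Delta>. c \<delta> \<ge> 0) \<or> (\<forall>\<delta>\<in>\<Delta>. c \<delta> \<le> 0)))"

definition pos_roots :: "'a::euclidean_space set \<Rightarrow> 'a set \<Rightarrow> 'a set" where
  "pos_roots \<Phi> \<Delta> = {\<beta>\<in>\<Phi>. \<exists>c. (\<forall>\<delta>\<in>\<Delta>. c \<delta> \<in> \<int> \<and> c \<delta> \<ge> 0) \<and> \<beta> = (\<Sum>\<delta>\<in>\<Delta>. c \<delta> *\<^sub>R \<delta>)}"

definition neg_roots :: "'a::euclidean_space set \<Rightarrow> 'a set \<Rightarrow> 'a set" where
  "neg_roots \<Phi> \<Delta> = uminus ` pos_roots \<Phi> \<Delta>"

definition prec :: "'a::euclidean_space set \<Rightarrow> 'a set \<Rightarrow> 'a \<Rightarrow> 'a \<Rightarrow> bool" where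
  "prec \<Phi> \<Delta> \<alpha> \<beta> \<longleftrightarrow> (\<exists>m::'a \<Rightarrow> nat. \<beta> - \<alpha> = (\<Sum>\<delta>\<in>pos_roots \<Phi> \<Delta>. real (m \<delta>) *\<^sub>R \<delta>))"

inductive_set weyl :: "'a::euclidean_space set \<Rightarrow> ('a \<Rightarrow> 'a) set" for \<Phi> where
  weyl_id: "id \<in> weyl \<Phi>"
| weyl_step: "w \<in> weyl \<Phi> \<Longrightarrow> \<alpha> \<in> \<Phi> \<Longrightarrow> refl \<alpha> \<circ> w \<in> weyl \<Phi>"

definition wlen :: "'a::euclidean_space set \<Rightarrow> ('a \<Rightarrow> 'a) \<Rightarrow> nat" where
  "wlen \<Delta> w = (LEAST n. \<exists>as. length as = n \<and> set as \<subseteq> \<Delta> \<and> w = foldr (\<lambda>\<alpha> f. refl \<alpha> \<circ> f) as id)"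

definition Nset :: "'a::euclidean_space set \<Rightarrow> 'a set \<Rightarrow> ('a \<Rightarrow> 'a) \<Rightarrow> 'a set" where
  "Nset \<Phi> \<Delta> w = {\<beta>\<in>pos_roots \<Phi> \<Delta>. inv w \<beta> \<in> neg_roots \<Phi> \<Delta>}"

definition Ngam :: "'a::euclidean_space set \<Rightarrow> 'a set \<Rightarrow> 'a \<Rightarrow> ('a \<Rightarrow> 'a) \<Rightarrow> 'a set" where
  "Ngam \<Phi> \<Delta> \<gamma> w = {\<beta>\<in>pos_roots \<Phi> \<Delta>. inv w \<beta> \<in> uminus ` (pos_roots \<Phi> \<Delta> - {\<gamma>})}"

definition len_gam :: "'a::euclidean_space set \<Rightarrow> 'a set \<Rightarrow> 'a \<Rightarrow> ('a \<Rightarrow> 'a) \<Rightarrow> nat" where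
  "len_gam \<Phi> \<Delta> \<gamma> w = card (Ngam \<Phi> \<Delta> \<gamma> w)"

definition bruhat_edges :: "'a::euclidean_space set \<Rightarrow> 'a set \<Rightarrow> (('a \<Rightarrow> 'a) \<times> ('a \<Rightarrow> 'a)) set" where
  "bruhat_edges \<Phi> \<Delta> = {(u, refl \<alpha> \<circ> u) | u \<alpha>. u \<in> weyl \<Phi> \<and> \<alpha> \<in> pos_roots \<Phi> \<Delta>
      \<and> inv (refl \<alpha> \<circ> u) \<alpha> \<in> neg_roots \<Phi> \<Delta>}"

definition bruhat_less :: "'a::euclidean_space set \<Rightarrow> 'a set \<Rightarrow> ('a \<Rightarrow> 'a) \<Rightarrow> ('a \<Rightarrow> 'a) \<Rightarrow> bool" where
  "bruhat_less \<Phi> \<Delta> w v \<longleftrightarrow> (w, v) \<in> (bruhat_edges \<Phi> \<Delta>)\<^sup>+"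

definition is_cover :: "'a::euclidean_space set \<Rightarrow> 'a set \<Rightarrow> ('a \<Rightarrow> 'a) \<Rightarrow> ('a \<Rightarrow> 'a) \<Rightarrow> bool" where
  "is_cover \<Phi> \<Delta> v w \<longleftrightarrow> (\<exists>\<alpha>\<in>pos_roots \<Phi> \<Delta>. v = refl \<alpha> \<circ> w \<and> (w, v) \<in> bruhat_edges \<Phi> \<Delta>
      \<and> wlen \<Delta> v = wlen \<Delta> w + 1)"

end

theory Submission
  imports Defs
begin

text \<open>The length \<open>\<ell>(u)\<close> equals \<open>|N\<^sub>u|\<close>, and \<open>N\<^sup>\<gamma>\<^sub>u = N\<^sub>u - {u(-\<gamma>)}\<close>, so \<open>\<ell>\<^sub>\<gamma>(u)\<close> is \<open>\<ell>(u) - 1\<close>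
  or \<open>\<ell>(u)\<close> according as \<open>u(-\<gamma>)\<close> lies in \<open>N\<^sub>u\<close> or not. Every edge of the Bruhat graph raises the
  length, so \<open>w < v\<close> forces \<open>\<ell>(w) < \<ell>(v)\<close>, with \<open>\<ell>(v) \<ge> \<ell>(w) + 2\<close> unless \<open>w \<rightarrow> v\<close> is an edge.
  Hence \<open>\<ell>\<^sub>\<gamma>(w) = \<ell>\<^sub>\<gamma>(v)\<close> exactly when \<open>\<ell>(v) = \<ell>(w) + 1\<close>, the count drops for \<open>v\<close> and does
  not drop for \<open>w\<close>.

  The equality \<open>\<ell>(u) = |N\<^sub>u|\<close> is the classical one: a simple reflection changes the number of
  inversions by exactly one, and the exchange property shows that reduced words realise it.\<close>

lemma refl_linear: "linear (refl \<alpha>)"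
  unfolding refl_def
  by (intro linearI) (auto simp: inner_add_left algebra_simps add_divide_distrib diff_divide_distrib)

lemma refl_apply_self: "\<alpha> \<noteq> 0 \<Longrightarrow> refl \<alpha> \<alpha> = - \<alpha>"
  unfolding refl_def by (simp add: scaleR_2)

lemma refl_refl [simp]: "refl \<alpha> (refl \<alpha> x) = x"
  by (cases "\<alpha> = 0") (simp_all add: refl_def inner_diff_left algebra_simps)

lemma refl_comp_refl [simp]: "refl \<alpha> \<circ> refl \<alpha> = id"
  by auto

lemma refl_comp_refl_comp [simp]: "refl \<alpha> \<circ> (refl \<alpha> \<circ> f) = f"
  by auto

lemma mem_refl_image_iff: "x \<in> refl \<alpha> ` A \<longleftrightarrow> refl \<alpha> x \<in> A"
  by (metis image_eqI imageE refl_refl)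

lemma refl_uminus: "refl (- \<alpha>) = refl \<alpha>"
  unfolding refl_def by auto

lemma inv_refl: "inv (refl \<alpha>) = refl \<alpha>"
  by (rule inv_unique_comp) simp_all

lemma orthogonal_transformation_refl: "orthogonal_transformation (refl \<alpha>)"
  unfolding orthogonal_transformation_def
  by (cases "\<alpha> = 0")
    (simp_all add: refl_linear refl_def inner_diff_left inner_diff_right algebra_simps inner_commute)

lemma bij_refl: "bij (refl \<alpha>)"
  using orthogonal_transformation_bij orthogonal_transformation_refl by blast

lemma orthogonal_transformation_comp_refl:
  assumes "orthogonal_transformation f"
  shows "f \<circ> refl \<alpha> = refl (f \<alpha>) \<circ> f"
proof
  fix x
  have "linear f" and "\<And>x y. f x \<bullet> f y = x \<bullet> y"
    using assms by (auto simp: orthogonal_transformation_def)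
  then show "(f \<circ> refl \<alpha>) x = (refl (f \<alpha>) \<circ> f) x"
    unfolding refl_def o_def by (simp add: linear_diff linear_scale)
qed

lemma sum_scaleR_single:
  assumes "finite A" "d \<in> A"
  shows "(\<Sum>x\<in>A. (if x = d then k else 0) *\<^sub>R x) = k *\<^sub>R (d::'a::real_vector)"
proof -
  have "(\<Sum>x\<in>A. (if x = d then k else 0) *\<^sub>R x) = (\<Sum>x\<in>A. if x = d then k *\<^sub>R x else 0)"
    by (rule sum.cong) auto
  then show ?thesis using assms by simp
qed

definition refl_prod :: "'a::euclidean_space list \<Rightarrow> 'a \<Rightarrow> 'a" where
  "refl_prod as = foldr (\<lambda>\<alpha> f. refl \<alpha> \<circ> f) as id"

lemma refl_prod_Nil [simp]: "refl_prod [] = id"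
  by (simp add: refl_prod_def)

lemma refl_prod_Cons [simp]: "refl_prod (a # as) = refl a \<circ> refl_prod as"
  by (simp add: refl_prod_def)

lemma refl_prod_append: "refl_prod (as @ bs) = refl_prod as \<circ> refl_prod bs"
  by (induction as) (auto simp: comp_assoc)

lemma refl_prod_snoc: "refl_prod (as @ [a]) = refl_prod as \<circ> refl a"
  by (simp add: refl_prod_append)

lemma inv_refl_prod: "inv (refl_prod as) = refl_prod (rev as)"
proof (rule inv_unique_comp)
  show "refl_prod (rev as) \<circ> refl_prod as = id"
    by (induction as) (simp_all add: refl_prod_append comp_assoc flip: comp_assoc[of _ "refl _"])
  show "refl_prod as \<circ> refl_prod (rev as) = id"
    by (induction as rule: rev_induct) (simp_all add: refl_prod_append comp_assoc)
qed

lemma wlen_eq_Least_refl_prod: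
  "wlen \<Delta> u = (LEAST n. \<exists>as. length as = n \<and> set as \<subseteq> \<Delta> \<and> u = refl_prod as)"
  unfolding wlen_def refl_prod_def by simp

locale root_base =
  fixes \<Phi> \<Delta> :: "'a::euclidean_space set"
  assumes root_system: "root_system \<Phi>" and is_base: "is_base \<Phi> \<Delta>"
begin

abbreviation "P \<equiv> pos_roots \<Phi> \<Delta>"
abbreviation "NP \<equiv> neg_roots \<Phi> \<Delta>"

lemma finite_roots: "finite \<Phi>"
  and zero_notin_roots: "0 \<notin> \<Phi>"
  and refl_root: "\<alpha> \<in> \<Phi> \<Longrightarrow> \<beta> \<in> \<Phi> \<Longrightarrow> refl \<alpha> \<beta> \<in> \<Phi>"
  and root_multiple: "\<alpha> \<in> \<Phi> \<Longrightarrow> c *\<^sub>R \<alpha> \<in> \<Phi> \<Longrightarrow> c = 1 \<or> c = -1"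
  using root_system unfolding root_system_def by auto

lemma base_subset_roots: "\<Delta> \<subseteq> \<Phi>"
  and independent_base: "independent \<Delta>"
  and root_base_coords: "\<beta> \<in> \<Phi> \<Longrightarrow> \<exists>c. (\<forall>\<delta>\<in>\<Delta>. c \<delta> \<in> \<int>) \<and> \<beta> = (\<Sum>\<delta>\<in>\<Delta>. c \<delta> *\<^sub>R \<delta>) \<and>
        ((\<forall>\<delta>\<in>\<Delta>. c \<delta> \<ge> 0) \<or> (\<forall>\<delta>\<in>\<Delta>. c \<delta> \<le> 0))"
  using is_base unfolding is_base_def by auto

lemma finite_base: "finite \<Delta>"
  using independent_base independent_bound by auto

lemma root_nonzero: "\<alpha> \<in> \<Phi> \<Longrightarrow> \<alpha> \<noteq> 0"
  using zero_notin_roots by auto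

lemma base_coords_unique:
  assumes "(\<Sum>\<delta>\<in>\<Delta>. a \<delta> *\<^sub>R \<delta>) = (\<Sum>\<delta>\<in>\<Delta>. b \<delta> *\<^sub>R \<delta>)" "d \<in> \<Delta>"
  shows "a d = b d"
proof (rule ccontr)
  assume "a d \<noteq> b d"
  moreover have "(\<Sum>\<delta>\<in>\<Delta>. (a \<delta> - b \<delta>) *\<^sub>R \<delta>) = 0"
    using assms(1) by (simp add: scaleR_diff_left sum_subtractf)
  ultimately have "dependent \<Delta>"
    using assms(2) by (auto simp: dependent_finite[OF finite_base] intro!: exI[of _ "\<lambda>\<delta>. a \<delta> - b \<delta>"])
  then show False using independent_base by simp
qed

lemma pos_roots_subset: "P \<subseteq> \<Phi>"
  unfolding pos_roots_def by auto

lemma finite_pos_roots: "finite P"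
  using pos_roots_subset finite_roots finite_subset by auto

lemma neg_roots_iff: "y \<in> NP \<longleftrightarrow> - y \<in> P"
  unfolding neg_roots_def by (metis image_eqI image_iff minus_minus)

lemma uminus_root: "\<alpha> \<in> \<Phi> \<Longrightarrow> - \<alpha> \<in> \<Phi>"
  using refl_root[of \<alpha> \<alpha>] refl_apply_self root_nonzero by metis

lemma pos_rootE:
  assumes "\<beta> \<in> P"
  obtains c where "\<forall>\<delta>\<in>\<Delta>. c \<delta> \<in> \<int> \<and> c \<delta> \<ge> 0" "\<beta> = (\<Sum>\<delta>\<in>\<Delta>. c \<delta> *\<^sub>R \<delta>)"
  using assms unfolding pos_roots_def by auto

lemma root_pos_or_neg: "\<alpha> \<in> \<Phi> \<Longrightarrow> \<alpha> \<in> P \<or> \<alpha> \<in> NP"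
proof -
  assume \<alpha>: "\<alpha> \<in> \<Phi>"
  obtain c where c: "\<forall>\<delta>\<in>\<Delta>. c \<delta> \<in> \<int>" "\<alpha> = (\<Sum>\<delta>\<in>\<Delta>. c \<delta> *\<^sub>R \<delta>)"
    "(\<forall>\<delta>\<in>\<Delta>. c \<delta> \<ge> 0) \<or> (\<forall>\<delta>\<in>\<Delta>. c \<delta> \<le> 0)"
    using root_base_coords[OF \<alpha>] by blast
  show ?thesis
  proof (cases "\<forall>\<delta>\<in>\<Delta>. c \<delta> \<ge> 0")
    case True
    then show ?thesis using c \<alpha> unfolding pos_roots_def by auto
  next
    case False
    then have "\<forall>\<delta>\<in>\<Delta>. - c \<delta> \<ge> 0" using c by auto
    moreover have "- \<alpha> = (\<Sum>\<delta>\<in>\<Delta>. (- c \<delta>) *\<^sub>R \<delta>)" using c by (simp add: sum_negf)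
    ultimately have "- \<alpha> \<in> P" using c uminus_root[OF \<alpha>] unfolding pos_roots_def
      by (auto intro!: exI[of _ "\<lambda>\<delta>. - c \<delta>"])
    then show ?thesis using neg_roots_iff by auto
  qed
qed

lemma pos_root_not_neg: "\<alpha> \<in> P \<Longrightarrow> \<alpha> \<notin> NP"
proof
  assume \<alpha>: "\<alpha> \<in> P" "\<alpha> \<in> NP"
  obtain c where c: "\<forall>\<delta>\<in>\<Delta>. c \<delta> \<in> \<int> \<and> c \<delta> \<ge> 0" "\<alpha> = (\<Sum>\<delta>\<in>\<Delta>. c \<delta> *\<^sub>R \<delta>)"
    using pos_rootE[OF \<alpha>(1)] by blast
  obtain d where d: "\<forall>\<delta>\<in>\<Delta>. d \<delta> \<in> \<int> \<and> d \<delta> \<ge> 0" "- \<alpha> = (\<Sum>\<delta>\<in>\<Delta>. d \<delta> *\<^sub>R \<delta>)"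
    using pos_rootE \<alpha>(2) neg_roots_iff by blast
  have "(\<Sum>\<delta>\<in>\<Delta>. (c \<delta> + d \<delta>) *\<^sub>R \<delta>) = \<alpha> + - \<alpha>"
    using c d by (simp add: scaleR_add_left sum.distrib)
  then have "(\<Sum>\<delta>\<in>\<Delta>. (c \<delta> + d \<delta>) *\<^sub>R \<delta>) = (\<Sum>\<delta>\<in>\<Delta>. 0 *\<^sub>R \<delta>)"
    by simp
  then have "\<forall>\<delta>\<in>\<Delta>. c \<delta> + d \<delta> = 0"
    using base_coords_unique[of "\<lambda>x. c x + d x" "\<lambda>x. 0"] by blast
  then have "\<forall>\<delta>\<in>\<Delta>. c \<delta> = 0" using c d by (metis add_nonneg_eq_0_iff)
  then have "\<alpha> = 0" using c by simp
  then show False using \<alpha> pos_roots_subset zero_notin_roots by auto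
qed

lemma base_subset_pos_roots: "\<Delta> \<subseteq> P"
proof
  fix \<delta> assume \<delta>: "\<delta> \<in> \<Delta>"
  have "\<delta> = (\<Sum>x\<in>\<Delta>. (if x = \<delta> then 1 else 0) *\<^sub>R x)"
    using \<delta> finite_base by (simp add: sum_scaleR_single)
  then show "\<delta> \<in> P" using \<delta> base_subset_roots unfolding pos_roots_def
    by (auto intro!: exI[of _ "\<lambda>x. if x = \<delta> then 1 else 0"])
qed

text \<open>The coordinates of \<open>\<beta> - s\<^sub>\<delta> \<beta>\<close> are supported on \<open>\<delta>\<close>; if \<open>s\<^sub>\<delta> \<beta>\<close> were negative, those of
  \<open>\<beta>\<close> would be too, and reducedness forces \<open>\<beta> = \<delta>\<close>.\<close>
lemma refl_simple_pos_root:
  assumes \<delta>: "\<delta> \<in> \<Delta>" and \<beta>: "\<beta> \<in> P" and ne: "\<beta> \<noteq> \<delta>"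
  shows "refl \<delta> \<beta> \<in> P"
proof (rule ccontr)
  assume "refl \<delta> \<beta> \<notin> P"
  moreover have "refl \<delta> \<beta> \<in> \<Phi>"
    using refl_root \<delta> \<beta> base_subset_roots pos_roots_subset by auto
  ultimately have "- refl \<delta> \<beta> \<in> P" using root_pos_or_neg neg_roots_iff by blast
  then obtain c' where c': "\<forall>x\<in>\<Delta>. c' x \<in> \<int> \<and> c' x \<ge> 0" "- refl \<delta> \<beta> = (\<Sum>x\<in>\<Delta>. c' x *\<^sub>R x)"
    using pos_rootE by blast
  obtain c where c: "\<forall>x\<in>\<Delta>. c x \<in> \<int> \<and> c x \<ge> 0" "\<beta> = (\<Sum>x\<in>\<Delta>. c x *\<^sub>R x)"
    using pos_rootE[OF \<beta>] by blast
  define k where "k = 2 * (\<beta> \<bullet> \<delta>) / (\<delta> \<bullet> \<delta>)"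
  have "(\<Sum>x\<in>\<Delta>. (c x + c' x) *\<^sub>R x) = \<beta> - refl \<delta> \<beta>"
    using c c' by (simp add: scaleR_add_left sum.distrib)
  also have "\<dots> = (\<Sum>x\<in>\<Delta>. (if x = \<delta> then k else 0) *\<^sub>R x)"
    using \<delta> finite_base by (simp add: sum_scaleR_single refl_def k_def)
  finally have "\<forall>x\<in>\<Delta>. c x + c' x = (if x = \<delta> then k else 0)"
    using base_coords_unique[of "\<lambda>x. c x + c' x" "\<lambda>x. if x = \<delta> then k else 0"] by blast
  then have "\<forall>x\<in>\<Delta>. x \<noteq> \<delta> \<longrightarrow> c x = 0" using c c' by (metis add_nonneg_eq_0_iff)
  then have "\<beta> = (\<Sum>x\<in>\<Delta>. (if x = \<delta> then c \<delta> else 0) *\<^sub>R x)"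
    using c(2) by (auto intro!: sum.cong)
  also have "\<dots> = c \<delta> *\<^sub>R \<delta>" using \<delta> finite_base by (simp add: sum_scaleR_single)
  finally have \<beta>_eq: "\<beta> = c \<delta> *\<^sub>R \<delta>" .
  then have "c \<delta> = 1 \<or> c \<delta> = -1"
    using root_multiple[of \<delta> "c \<delta>"] \<beta> pos_roots_subset \<delta> base_subset_roots by auto
  moreover have "c \<delta> \<ge> 0" using c \<delta> by auto
  ultimately show False using \<beta>_eq ne by auto
qed

lemma refl_in_weyl: "\<alpha> \<in> \<Phi> \<Longrightarrow> refl \<alpha> \<in> weyl \<Phi>"
  using weyl_step[OF weyl_id, of \<alpha>] by simp

lemma weyl_comp: "u \<in> weyl \<Phi> \<Longrightarrow> w \<in> weyl \<Phi> \<Longrightarrow> u \<circ> w \<in> weyl \<Phi>"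
  by (induction u rule: weyl.induct) (auto simp: comp_assoc intro: weyl.intros)

lemma orthogonal_transformation_weyl: "u \<in> weyl \<Phi> \<Longrightarrow> orthogonal_transformation u"
  by (induction u rule: weyl.induct)
    (auto simp only: id_def intro: orthogonal_transformation_compose orthogonal_transformation_refl
      orthogonal_transformation_id)

lemma linear_weyl: "u \<in> weyl \<Phi> \<Longrightarrow> linear u"
  using orthogonal_transformation_weyl orthogonal_transformation_linear by blast

lemma bij_weyl: "u \<in> weyl \<Phi> \<Longrightarrow> bij u"
  using orthogonal_transformation_weyl orthogonal_transformation_bij by blast

lemma weyl_root: "u \<in> weyl \<Phi> \<Longrightarrow> \<alpha> \<in> \<Phi> \<Longrightarrow> u \<alpha> \<in> \<Phi>"
  by (induction u rule: weyl.induct) (auto intro: refl_root)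

lemma inv_weyl: "u \<in> weyl \<Phi> \<Longrightarrow> inv u \<in> weyl \<Phi>"
proof (induction u rule: weyl.induct)
  case weyl_id
  then show ?case by (simp only: inv_id weyl.weyl_id)
next
  case (weyl_step w \<alpha>)
  have "inv (refl \<alpha> \<circ> w) = inv w \<circ> refl \<alpha>"
    using o_inv_distrib[OF bij_refl bij_weyl[OF weyl_step(1)]] by (simp add: inv_refl)
  then show ?case using weyl_comp[OF weyl_step(3) refl_in_weyl[OF weyl_step(2)]] by (simp only:)
qed

lemma weyl_refl_apply_self: "u \<in> weyl \<Phi> \<Longrightarrow> \<alpha> \<in> \<Phi> \<Longrightarrow> u (refl \<alpha> \<alpha>) = - u \<alpha>"
  using refl_apply_self root_nonzero linear_neg[OF linear_weyl] by metis

lemma refl_prod_in_weyl: "set as \<subseteq> \<Phi> \<Longrightarrow> refl_prod as \<in> weyl \<Phi>"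
  by (induction as) (auto intro: weyl.intros)

lemma refl_prod_base_in_weyl: "set as \<subseteq> \<Delta> \<Longrightarrow> refl_prod as \<in> weyl \<Phi>"
  using refl_prod_in_weyl base_subset_roots by auto

lemma refl_simple_permutes_pos_roots:
  assumes \<delta>: "\<delta> \<in> \<Delta>"
  shows "refl \<delta> ` (P - {\<delta>}) = P - {\<delta>}"
proof -
  have \<delta>_pos: "\<delta> \<in> P" and "\<delta> \<noteq> 0"
    using \<delta> base_subset_pos_roots base_subset_roots root_nonzero by blast+
  have ne: "refl \<delta> \<beta> \<noteq> \<delta>" if "\<beta> \<in> P" for \<beta>
  proof
    assume "refl \<delta> \<beta> = \<delta>"
    then have "\<beta> = - \<delta>" using refl_refl[of \<delta> \<beta>] refl_apply_self[OF \<open>\<delta> \<noteq> 0\<close>] by metis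
    then show False using that \<delta>_pos pos_root_not_neg neg_roots_iff by blast
  qed
  have maps: "refl \<delta> \<beta> \<in> P - {\<delta>}" if "\<beta> \<in> P - {\<delta>}" for \<beta>
    using that ne refl_simple_pos_root[OF \<delta>] by blast
  show ?thesis
  proof (rule set_eqI)
    fix \<beta>
    show "\<beta> \<in> refl \<delta> ` (P - {\<delta>}) \<longleftrightarrow> \<beta> \<in> P - {\<delta>}"
      unfolding mem_refl_image_iff using maps[of \<beta>] maps[of "refl \<delta> \<beta>"] by (metis refl_refl)
  qed
qed

definition inversions :: "('a \<Rightarrow> 'a) \<Rightarrow> 'a set" where
  "inversions x = {\<beta>\<in>P. x \<beta> \<in> NP}"

lemma Nset_eq_inversions_inv: "Nset \<Phi> \<Delta> u = inversions (inv u)"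
  unfolding Nset_def inversions_def ..

lemma finite_inversions: "finite (inversions x)"
  unfolding inversions_def using finite_pos_roots by auto

lemma card_inversions_id [simp]: "card (inversions (\<lambda>x. x)) = 0"
proof -
  have "inversions (\<lambda>x. x) = {}" unfolding inversions_def using pos_root_not_neg by blast
  then show ?thesis by simp
qed

lemma card_inversions_comp_refl_simple:
  assumes \<delta>: "\<delta> \<in> \<Delta>" and x: "x \<in> weyl \<Phi>" and pos: "x \<delta> \<in> P"
  shows "card (inversions (x \<circ> refl \<delta>)) = card (inversions x) + 1"
proof -
  have \<delta>_pos: "\<delta> \<in> P" using \<delta> base_subset_pos_roots by auto
  have "x (refl \<delta> \<delta>) = - x \<delta>"
    using weyl_refl_apply_self x \<delta> base_subset_roots by auto
  then have in_comp: "\<delta> \<in> inversions (x \<circ> refl \<delta>)"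
    using \<delta>_pos pos neg_roots_iff unfolding inversions_def by simp
  have notin: "\<delta> \<notin> inversions x"
    using pos pos_root_not_neg unfolding inversions_def by auto
  have "inversions (x \<circ> refl \<delta>) - {\<delta>} = {\<beta>\<in>P - {\<delta>}. x (refl \<delta> \<beta>) \<in> NP}"
    unfolding inversions_def by auto
  also have "\<dots> = refl \<delta> ` {\<beta>\<in>P - {\<delta>}. x \<beta> \<in> NP}"
  proof -
    have "refl \<delta> \<beta> \<in> P - {\<delta>} \<longleftrightarrow> \<beta> \<in> P - {\<delta>}" for \<beta>
      using refl_simple_permutes_pos_roots[OF \<delta>] mem_refl_image_iff[of \<beta> \<delta> "P - {\<delta>}"] by simp
    then show ?thesis unfolding set_eq_iff mem_refl_image_iff mem_Collect_eq by blast
  qed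
  also have "\<dots> = refl \<delta> ` inversions x"
    using notin unfolding inversions_def by auto
  finally have "card (inversions (x \<circ> refl \<delta>) - {\<delta>}) = card (inversions x)"
    by (simp add: card_image inj_on_subset[OF bij_is_inj[OF bij_refl] subset_UNIV])
  then show ?thesis
    using in_comp finite_inversions card_Suc_Diff1 by fastforce
qed

lemma card_inversions_comp_refl_simple_neg:
  assumes \<delta>: "\<delta> \<in> \<Delta>" and x: "x \<in> weyl \<Phi>" and neg: "x \<delta> \<in> NP"
  shows "card (inversions (x \<circ> refl \<delta>)) + 1 = card (inversions x)"
proof -
  have x': "x \<circ> refl \<delta> \<in> weyl \<Phi>"
    using weyl_comp[OF x refl_in_weyl] \<delta> base_subset_roots by auto
  have "(x \<circ> refl \<delta>) \<delta> = - x \<delta>"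
    using weyl_refl_apply_self x \<delta> base_subset_roots by auto
  then have "(x \<circ> refl \<delta>) \<delta> \<in> P" using neg neg_roots_iff by simp
  moreover have "x \<circ> refl \<delta> \<circ> refl \<delta> = x"
    by (simp add: comp_assoc)
  ultimately show ?thesis
    using card_inversions_comp_refl_simple[OF \<delta> x'] by metis
qed

text \<open>Apply the letters of the word to \<open>\<alpha>\<close> from the right. The sign turns negative at some letter
  \<open>a\<close>; as \<open>s\<^sub>a\<close> makes no positive root other than \<open>a\<close> negative, the suffix after \<open>a\<close> maps \<open>\<alpha>\<close>
  to \<open>a\<close>, and pushing \<open>s\<^sub>\<alpha>\<close> through that suffix turns it into \<open>s\<^sub>a\<close>, which cancels the letter.\<close>
lemma refl_prod_exchange:
  assumes as: "set as \<subseteq> \<Delta>" and \<alpha>: "\<alpha> \<in> P" and neg: "refl_prod as \<alpha> \<in> NP"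
  obtains i where "i < length as" "refl_prod as \<circ> refl \<alpha> = refl_prod (take i as @ drop (Suc i) as)"
proof -
  define b where "b i = refl_prod (drop i as) \<alpha>" for i
  define j where "j = (LEAST i. b i \<in> P)"
  have "b (length as) \<in> P" unfolding b_def using \<alpha> by simp
  then have bj: "b j \<in> P" and j_le: "j \<le> length as"
    unfolding j_def by (rule LeastI, rule Least_le)
  have below: "b i \<notin> P" if "i < j" for i
    using that unfolding j_def by (rule not_less_Least)
  have "b 0 \<notin> P" unfolding b_def using neg pos_root_not_neg by auto
  then obtain i where j: "j = Suc i" using bj by (cases j) auto
  then have i: "i < length as" using j_le by simp
  define a where "a = as ! i"
  have a: "a \<in> \<Delta>" using as i a_def nth_mem by blast
  have drop_i: "drop i as = a # drop j as" using i j a_def by (simp add: Cons_nth_drop_Suc)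
  have "b j = a"
  proof (rule ccontr)
    assume "b j \<noteq> a"
    then have "refl a (b j) \<in> P" using refl_simple_pos_root[OF a bj] by simp
    then show False using below[of i] j drop_i unfolding b_def by simp
  qed
  define y where "y = refl_prod (drop j as)"
  have "y \<in> weyl \<Phi>"
    unfolding y_def using refl_prod_base_in_weyl as set_drop_subset by (meson subset_trans)
  moreover have "y \<alpha> = a" using \<open>b j = a\<close> unfolding b_def y_def .
  ultimately have y_conj: "y \<circ> refl \<alpha> = refl a \<circ> y"
    using orthogonal_transformation_comp_refl[OF orthogonal_transformation_weyl] by simp
  have "refl_prod as = refl_prod (take i as) \<circ> refl_prod (drop i as)"
    using refl_prod_append[of "take i as" "drop i as"] by simp
  also have "\<dots> = refl_prod (take i as) \<circ> (refl a \<circ> y)"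
    using drop_i y_def by simp
  finally have "refl_prod as \<circ> refl \<alpha> = refl_prod (take i as) \<circ> (refl a \<circ> (y \<circ> refl \<alpha>))"
    by (simp add: comp_assoc)
  also have "\<dots> = refl_prod (take i as @ drop j as)"
    unfolding y_conj by (simp add: y_def refl_prod_append)
  finally show ?thesis using that i j by blast
qed

lemma card_inversions_refl_prod_le: "set as \<subseteq> \<Delta> \<Longrightarrow> card (inversions (refl_prod as)) \<le> length as"
proof (induction as rule: rev_induct)
  case Nil
  then show ?case by simp
next
  case (snoc a as)
  then have a: "a \<in> \<Delta>" and as: "set as \<subseteq> \<Delta>" by auto
  have w: "refl_prod as \<in> weyl \<Phi>" using refl_prod_base_in_weyl[OF as] .
  have "refl_prod as a \<in> P \<or> refl_prod as a \<in> NP"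
    using root_pos_or_neg weyl_root[OF w] a base_subset_roots by auto
  then have "card (inversions (refl_prod as \<circ> refl a)) \<le> card (inversions (refl_prod as)) + 1"
    using card_inversions_comp_refl_simple[OF a w] card_inversions_comp_refl_simple_neg[OF a w]
    by (elim disjE) simp_all
  then show ?case
    using snoc.IH[OF as] unfolding refl_prod_snoc length_append_singleton by linarith
qed

definition reduced_word :: "'a list \<Rightarrow> bool" where
  "reduced_word as \<longleftrightarrow> set as \<subseteq> \<Delta> \<and>
     (\<forall>cs. set cs \<subseteq> \<Delta> \<longrightarrow> refl_prod cs = refl_prod as \<longrightarrow> length as \<le> length cs)"

lemma reduced_word_snocD:
  assumes "reduced_word (as @ [a])"
  shows "reduced_word as"
  unfolding reduced_word_def
proof (intro conjI allI impI)
  show "set as \<subseteq> \<Delta>" using assms by (simp add: reduced_word_def)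
  fix cs
  assume "set cs \<subseteq> \<Delta>" "refl_prod cs = refl_prod as"
  then have "set (cs @ [a]) \<subseteq> \<Delta>" "refl_prod (cs @ [a]) = refl_prod (as @ [a])"
    using assms by (simp_all add: reduced_word_def refl_prod_snoc)
  then have "length (as @ [a]) \<le> length (cs @ [a])"
    using assms unfolding reduced_word_def by blast
  then show "length as \<le> length cs" by simp
qed

lemma card_inversions_reduced_word:
  "reduced_word as \<Longrightarrow> card (inversions (refl_prod as)) = length as"
proof (induction as rule: rev_induct)
  case Nil
  then show ?case by simp
next
  case (snoc a as)
  have a: "a \<in> \<Delta>" and as: "set as \<subseteq> \<Delta>" using snoc.prems by (auto simp: reduced_word_def)
  have w: "refl_prod as \<in> weyl \<Phi>" using refl_prod_base_in_weyl[OF as] .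
  have "refl_prod as a \<in> P"
  proof (rule ccontr)
    assume "refl_prod as a \<notin> P"
    then have "refl_prod as a \<in> NP"
      using root_pos_or_neg weyl_root[OF w] a base_subset_roots by auto
    moreover have "a \<in> P" using a base_subset_pos_roots by blast
    ultimately obtain i where "i < length as"
      and "refl_prod (as @ [a]) = refl_prod (take i as @ drop (Suc i) as)"
      using refl_prod_exchange[OF as] unfolding refl_prod_snoc by blast
    moreover have "set (take i as @ drop (Suc i) as) \<subseteq> \<Delta>"
      using as set_take_subset set_drop_subset by fastforce
    ultimately have "length (as @ [a]) \<le> length (take i as @ drop (Suc i) as)"
      using snoc.prems unfolding reduced_word_def by metis
    then show False using \<open>i < length as\<close> by simp
  qed
  then show ?case
    using card_inversions_comp_refl_simple[OF a w] snoc.IH[OF reduced_word_snocD[OF snoc.prems]]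
    unfolding refl_prod_snoc length_append_singleton by linarith
qed

definition height :: "'a \<Rightarrow> real" where
  "height = (SOME h. linear h \<and> (\<forall>\<delta>\<in>\<Delta>. h \<delta> = 1))"

lemma linear_height: "linear height" and height_simple: "\<delta> \<in> \<Delta> \<Longrightarrow> height \<delta> = 1"
proof -
  have "\<exists>h::'a \<Rightarrow> real. linear h \<and> (\<forall>\<delta>\<in>\<Delta>. h \<delta> = 1)"
    using linear_independent_extend[OF independent_base, of "\<lambda>_. 1"] by blast
  then have "linear height \<and> (\<forall>\<delta>\<in>\<Delta>. height \<delta> = 1)"
    unfolding height_def by (rule someI_ex)
  then show "linear height" "\<delta> \<in> \<Delta> \<Longrightarrow> height \<delta> = 1" by auto
qed

lemma height_pos_root:
  assumes "\<beta> \<in> P"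
  obtains n :: nat where "height \<beta> = n"
proof -
  obtain c where c: "\<forall>x\<in>\<Delta>. c x \<in> \<int> \<and> c x \<ge> 0" "\<beta> = (\<Sum>x\<in>\<Delta>. c x *\<^sub>R x)"
    using pos_rootE[OF assms] by blast
  then have "height \<beta> = (\<Sum>x\<in>\<Delta>. c x)"
    by (simp add: linear_sum[OF linear_height] linear_scale[OF linear_height] height_simple)
  then have "height \<beta> \<in> \<int>" "height \<beta> \<ge> 0"
    using c(1) by (simp_all add: Ints_sum sum_nonneg)
  then obtain m where "height \<beta> = of_int m" "m \<ge> 0"
    by (metis Ints_cases of_int_0_le_iff)
  then show ?thesis using that[of "nat m"] by simp
qed

lemma pos_root_inner_simple_pos:
  assumes "\<beta> \<in> P"
  obtains \<delta> where "\<delta> \<in> \<Delta>" "\<delta> \<bullet> \<beta> > 0"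
proof (rule ccontr)
  assume "\<not> thesis"
  then have nonpos: "\<forall>x\<in>\<Delta>. x \<bullet> \<beta> \<le> 0" using that by force
  obtain c where c: "\<forall>x\<in>\<Delta>. c x \<in> \<int> \<and> c x \<ge> 0" "\<beta> = (\<Sum>x\<in>\<Delta>. c x *\<^sub>R x)"
    using pos_rootE[OF assms] by blast
  have "\<beta> \<bullet> \<beta> = (\<Sum>x\<in>\<Delta>. c x * (x \<bullet> \<beta>))"
    by (subst (1) c(2)) (simp add: inner_sum_left)
  also have "\<dots> \<le> 0"
    using c(1) nonpos by (intro sum_nonpos) (simp add: mult_nonneg_nonpos)
  finally show False
    using assms pos_roots_subset root_nonzero by (metis inner_gt_zero_iff not_le subsetD)
qed

lemma pos_root_height_descent:
  assumes \<beta>: "\<beta> \<in> P" "\<beta> \<notin> \<Delta>"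
  obtains \<delta> where "\<delta> \<in> \<Delta>" "refl \<delta> \<beta> \<in> P" "height (refl \<delta> \<beta>) < height \<beta>"
proof -
  obtain \<delta> where \<delta>: "\<delta> \<in> \<Delta>" "\<delta> \<bullet> \<beta> > 0"
    using pos_root_inner_simple_pos[OF \<beta>(1)] by blast
  have "\<delta> \<noteq> 0" using \<delta>(1) base_subset_roots root_nonzero by blast
  then have "2 * (\<beta> \<bullet> \<delta>) / (\<delta> \<bullet> \<delta>) > 0"
    using \<delta>(2) by (simp add: inner_commute)
  moreover have "height (refl \<delta> \<beta>) = height \<beta> - 2 * (\<beta> \<bullet> \<delta>) / (\<delta> \<bullet> \<delta>)"
    unfolding refl_def
    by (simp add: linear_diff[OF linear_height] linear_scale[OF linear_height] height_simple[OF \<delta>(1)])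
  moreover have "refl \<delta> \<beta> \<in> P" using refl_simple_pos_root \<delta>(1) \<beta> by blast
  ultimately show ?thesis using that \<delta>(1) by simp
qed

lemma pos_root_conj_simple:
  assumes "\<beta> \<in> P"
  shows "\<exists>as \<delta>. set as \<subseteq> \<Delta> \<and> \<delta> \<in> \<Delta> \<and> \<beta> = refl_prod as \<delta>"
proof -
  obtain n :: nat where "height \<beta> = n" using height_pos_root[OF assms] .
  then show ?thesis using assms
  proof (induction n arbitrary: \<beta> rule: less_induct)
    case (less n)
    show ?case
    proof (cases "\<beta> \<in> \<Delta>")
      case True
      then show ?thesis by (intro exI[of _ "[]"] exI[of _ \<beta>]) simp
    next
      case False
      then obtain \<delta> where \<delta>: "\<delta> \<in> \<Delta>" "refl \<delta> \<beta> \<in> P" "height (refl \<delta> \<beta>) < height \<beta>"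
        using pos_root_height_descent less.prems(2) by blast
      obtain m :: nat where m: "height (refl \<delta> \<beta>) = m" using height_pos_root[OF \<delta>(2)] .
      then have "m < n" using \<delta>(3) less.prems(1) by simp
      then obtain as \<delta>' where as: "set as \<subseteq> \<Delta>" "\<delta>' \<in> \<Delta>" "refl \<delta> \<beta> = refl_prod as \<delta>'"
        using less.IH m \<delta>(2) by blast
      then have "\<beta> = refl_prod (\<delta> # as) \<delta>'" by (metis comp_apply refl_prod_Cons refl_refl)
      then show ?thesis using \<delta>(1) as by (intro exI[of _ "\<delta> # as"] exI[of _ \<delta>']) auto
    qed
  qed
qed

lemma refl_eq_refl_prod_base:
  assumes \<alpha>: "\<alpha> \<in> \<Phi>"
  obtains cs where "set cs \<subseteq> \<Delta>" "refl \<alpha> = refl_prod cs"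
proof -
  obtain \<beta> where \<beta>: "\<beta> \<in> P" "refl \<alpha> = refl \<beta>"
    using root_pos_or_neg[OF \<alpha>] neg_roots_iff refl_uminus by metis
  obtain as \<delta> where as: "set as \<subseteq> \<Delta>" "\<delta> \<in> \<Delta>" "\<beta> = refl_prod as \<delta>"
    using pos_root_conj_simple[OF \<beta>(1)] by blast
  have "refl_prod as \<circ> refl \<delta> = refl \<beta> \<circ> refl_prod as"
    using orthogonal_transformation_comp_refl orthogonal_transformation_weyl
      refl_prod_base_in_weyl[OF as(1)] as(3) by blast
  moreover have "refl_prod as \<circ> inv (refl_prod as) = id"
    using bij_weyl[OF refl_prod_base_in_weyl[OF as(1)]] bij_is_surj surj_iff by blast
  ultimately have "refl \<beta> = refl_prod as \<circ> refl \<delta> \<circ> inv (refl_prod as)"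
    by (metis comp_assoc comp_id)
  also have "\<dots> = refl_prod (as @ [\<delta>] @ rev as)"
    by (simp add: inv_refl_prod refl_prod_append comp_assoc)
  finally have "refl \<alpha> = refl_prod (as @ [\<delta>] @ rev as)" using \<beta>(2) by simp
  moreover have "set (as @ [\<delta>] @ rev as) \<subseteq> \<Delta>" using as by auto
  ultimately show ?thesis using that by blast
qed

lemma weyl_eq_refl_prod_base: "u \<in> weyl \<Phi> \<Longrightarrow> \<exists>as. set as \<subseteq> \<Delta> \<and> u = refl_prod as"
proof (induction u rule: weyl.induct)
  case weyl_id
  show ?case by (intro exI[of _ "[]"]) simp
next
  case (weyl_step w \<alpha>)
  then obtain as cs where "set as \<subseteq> \<Delta>" "w = refl_prod as" "set cs \<subseteq> \<Delta>" "refl \<alpha> = refl_prod cs"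
    using refl_eq_refl_prod_base by metis
  then show ?case by (intro exI[of _ "cs @ as"]) (simp add: refl_prod_append)
qed

lemma wlen_refl_prod_le: "set cs \<subseteq> \<Delta> \<Longrightarrow> wlen \<Delta> (refl_prod cs) \<le> length cs"
  unfolding wlen_eq_Least_refl_prod by (rule Least_le) blast

lemma reduced_word_exists:
  assumes "u \<in> weyl \<Phi>"
  obtains as where "reduced_word as" "u = refl_prod as" "length as = wlen \<Delta> u"
proof -
  let ?Q = "\<lambda>n. \<exists>as. length as = n \<and> set as \<subseteq> \<Delta> \<and> u = refl_prod as"
  have "\<exists>n. ?Q n" using weyl_eq_refl_prod_base[OF assms] by blast
  then have "?Q (LEAST n. ?Q n)" by (rule LeastI_ex)
  then obtain as where as: "length as = wlen \<Delta> u" "set as \<subseteq> \<Delta>" "u = refl_prod as"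
    unfolding wlen_eq_Least_refl_prod by blast
  then have "reduced_word as"
    unfolding reduced_word_def using wlen_refl_prod_le by metis
  then show ?thesis using that as by blast
qed

lemma wlen_eq_card_inversions: "u \<in> weyl \<Phi> \<Longrightarrow> wlen \<Delta> u = card (inversions u)"
  using reduced_word_exists card_inversions_reduced_word by metis

lemma wlen_inv: assumes "u \<in> weyl \<Phi>" shows "wlen \<Delta> (inv u) = wlen \<Delta> u"
proof -
  have le: "wlen \<Delta> (inv x) \<le> wlen \<Delta> x" if x: "x \<in> weyl \<Phi>" for x
  proof -
    obtain as where "reduced_word as" "x = refl_prod as" "length as = wlen \<Delta> x"
      using reduced_word_exists[OF x] .
    then show ?thesis
      using wlen_refl_prod_le[of "rev as"] by (simp add: inv_refl_prod reduced_word_def)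
  qed
  have "inv (inv u) = u" using bij_weyl[OF assms] by (simp add: inv_inv_eq)
  then show ?thesis using le[OF assms] le[OF inv_weyl[OF assms]] by simp
qed

lemma card_Nset_eq_wlen: "u \<in> weyl \<Phi> \<Longrightarrow> card (Nset \<Phi> \<Delta> u) = wlen \<Delta> u"
  using wlen_eq_card_inversions[OF inv_weyl] wlen_inv by (simp add: Nset_eq_inversions_inv)

lemma card_inversions_comp_refl_less:
  assumes z: "z \<in> weyl \<Phi>" and \<alpha>: "\<alpha> \<in> P" and neg: "z \<alpha> \<in> NP"
  shows "card (inversions (z \<circ> refl \<alpha>)) < card (inversions z)"
proof -
  obtain as where as: "reduced_word as" "z = refl_prod as" "length as = wlen \<Delta> z"
    using reduced_word_exists[OF z] .
  then have "set as \<subseteq> \<Delta>" by (simp add: reduced_word_def)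
  then obtain i where "i < length as" "z \<circ> refl \<alpha> = refl_prod (take i as @ drop (Suc i) as)"
    using refl_prod_exchange \<alpha> neg as(2) by blast
  moreover have "set (take i as @ drop (Suc i) as) \<subseteq> \<Delta>"
    using \<open>set as \<subseteq> \<Delta>\<close> set_take_subset set_drop_subset by fastforce
  ultimately have "card (inversions (z \<circ> refl \<alpha>)) < length as"
    using card_inversions_refl_prod_le by fastforce
  then show ?thesis using card_inversions_reduced_word[OF as(1)] as(2) by simp
qed

text \<open>Along an edge \<open>x \<rightarrow> v = s\<^sub>\<alpha> x\<close> put \<open>z = v\<^sup>-\<^sup>1\<close>; the edge condition says \<open>z \<alpha> < 0\<close>, and
  \<open>z s\<^sub>\<alpha> = x\<^sup>-\<^sup>1\<close>.\<close>
lemma wlen_less_bruhat_edge: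
  assumes "(x, v) \<in> bruhat_edges \<Phi> \<Delta>"
  shows "wlen \<Delta> x < wlen \<Delta> v"
proof -
  obtain \<alpha> where v: "v = refl \<alpha> \<circ> x" and x: "x \<in> weyl \<Phi>" and \<alpha>: "\<alpha> \<in> P"
    and neg: "inv (refl \<alpha> \<circ> x) \<alpha> \<in> NP"
    using assms unfolding bruhat_edges_def by blast
  have v_weyl: "v \<in> weyl \<Phi>"
    using v x \<alpha> pos_roots_subset by (auto intro: weyl.weyl_step)
  define z where "z = inv v"
  have z: "z \<in> weyl \<Phi>" unfolding z_def using inv_weyl[OF v_weyl] .
  have "z \<circ> refl \<alpha> = inv x"
    unfolding z_def v
    using o_inv_distrib[OF bij_refl bij_weyl[OF x]]
    by (simp add: inv_refl comp_assoc)
  moreover have "z \<alpha> \<in> NP" using neg v z_def by simp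
  ultimately have "card (inversions (inv x)) < card (inversions z)"
    using card_inversions_comp_refl_less[OF z \<alpha>] by metis
  then show ?thesis
    using card_Nset_eq_wlen[OF x] card_Nset_eq_wlen[OF v_weyl]
    by (simp add: Nset_eq_inversions_inv z_def)
qed

lemma wlen_less_bruhat_less:
  "(w, v) \<in> (bruhat_edges \<Phi> \<Delta>)\<^sup>+ \<Longrightarrow> wlen \<Delta> w < wlen \<Delta> v"
  by (induction rule: trancl_induct) (use wlen_less_bruhat_edge less_trans in blast)+

lemma bruhat_less_edge_or_wlen_gap:
  assumes "(w, v) \<in> (bruhat_edges \<Phi> \<Delta>)\<^sup>+"
  shows "(w, v) \<in> bruhat_edges \<Phi> \<Delta> \<or> wlen \<Delta> w + 2 \<le> wlen \<Delta> v"
  using assms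
proof (cases rule: tranclE)
  case (step c)
  then show ?thesis using wlen_less_bruhat_less[of w c] wlen_less_bruhat_edge[of c v] by auto
qed simp

lemma Ngam_eq_Nset_Diff:
  assumes "u \<in> weyl \<Phi>"
  shows "Ngam \<Phi> \<Delta> \<gamma> u = Nset \<Phi> \<Delta> u - {u (- \<gamma>)}"
proof -
  have "inv u y = - \<gamma> \<longleftrightarrow> y = u (- \<gamma>)" for y
    using bij_weyl[OF assms] by (metis bij_inv_eq_iff)
  moreover have "y \<in> uminus ` (P - {\<gamma>}) \<longleftrightarrow> y \<in> NP \<and> y \<noteq> - \<gamma>" for y
    using neg_roots_iff by (force simp: image_iff)
  ultimately show ?thesis unfolding Ngam_def Nset_def by auto
qed

lemma ex_Nset_inv_eq_iff:
  assumes "u \<in> weyl \<Phi>"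
  shows "(\<exists>\<beta>\<in>Nset \<Phi> \<Delta> u. inv u \<beta> = - \<gamma>) \<longleftrightarrow> u (- \<gamma>) \<in> Nset \<Phi> \<Delta> u"
  using bij_weyl[OF assms] by (metis bij_inv_eq_iff)

lemma len_gam_eq:
  assumes "u \<in> weyl \<Phi>"
  shows "len_gam \<Phi> \<Delta> \<gamma> u = (if u (- \<gamma>) \<in> Nset \<Phi> \<Delta> u then wlen \<Delta> u - 1 else wlen \<Delta> u)"
  unfolding len_gam_def Ngam_eq_Nset_Diff[OF assms] card_Nset_eq_wlen[OF assms, symmetric]
  by (rule card_Diff_singleton_if)

lemma is_cover_iff_wlen:
  assumes "(w, v) \<in> (bruhat_edges \<Phi> \<Delta>)\<^sup>+"
  shows "is_cover \<Phi> \<Delta> v w \<longleftrightarrow> wlen \<Delta> v = wlen \<Delta> w + 1"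
proof
  assume "wlen \<Delta> v = wlen \<Delta> w + 1"
  moreover from this have edge: "(w, v) \<in> bruhat_edges \<Phi> \<Delta>"
    using bruhat_less_edge_or_wlen_gap[OF assms] by simp
  moreover from edge obtain \<alpha> where "\<alpha> \<in> P" "v = refl \<alpha> \<circ> w"
    unfolding bruhat_edges_def by blast
  ultimately show "is_cover \<Phi> \<Delta> v w" unfolding is_cover_def by blast
qed (simp add: is_cover_def)

end

theorem lemma3p1:
  fixes \<Phi> \<Delta> :: "'a::euclidean_space set" and \<gamma> :: 'a and v w :: "'a \<Rightarrow> 'a"
  assumes "root_system \<Phi>" and "is_base \<Phi> \<Delta>" and "irreducible_rs \<Phi>"
    and "\<gamma> \<in> pos_roots \<Phi> \<Delta>" and "\<forall>\<alpha>\<in>\<Phi>. prec \<Phi> \<Delta> \<alpha> \<gamma>"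
    and "v \<in> weyl \<Phi>" and "w \<in> weyl \<Phi>"
    and "bruhat_less \<Phi> \<Delta> w v"
  shows "len_gam \<Phi> \<Delta> \<gamma> w = len_gam \<Phi> \<Delta> \<gamma> v \<longleftrightarrow>
    (is_cover \<Phi> \<Delta> v w \<and> Nset \<Phi> \<Delta> w = Ngam \<Phi> \<Delta> \<gamma> w
     \<and> (\<exists>\<beta>\<in>Nset \<Phi> \<Delta> v. inv v \<beta> = - \<gamma>))"
proof -
  interpret root_base \<Phi> \<Delta> using assms(1,2) by unfold_locales
  have path: "(w, v) \<in> (bruhat_edges \<Phi> \<Delta>)\<^sup>+"
    using assms(8) unfolding bruhat_less_def .
  have "wlen \<Delta> w < wlen \<Delta> v" using wlen_less_bruhat_less[OF path] .
  moreover have "wlen \<Delta> w \<ge> 1" if "w (- \<gamma>) \<in> Nset \<Phi> \<Delta> w"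
    using that card_Nset_eq_wlen[OF assms(7)] card_gt_0_iff[of "Nset \<Phi> \<Delta> w"] finite_inversions
    by (fastforce simp: Nset_eq_inversions_inv)
  moreover have "Nset \<Phi> \<Delta> w = Ngam \<Phi> \<Delta> \<gamma> w \<longleftrightarrow> w (- \<gamma>) \<notin> Nset \<Phi> \<Delta> w"
    unfolding Ngam_eq_Nset_Diff[OF assms(7)] by blast
  ultimately show ?thesis
    unfolding len_gam_eq[OF assms(6)] len_gam_eq[OF assms(7)] is_cover_iff_wlen[OF path]
      ex_Nset_inv_eq_iff[OF assms(6)]
    by (cases "w (- \<gamma>) \<in> Nset \<Phi> \<Delta> w"; cases "v (- \<gamma>) \<in> Nset \<Phi> \<Delta> v"; simp; linarith)
qed

end
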